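(* Let $G$ be a graph obtained as follows: start with a connected bipartite graph with bipartition $X\sqcup Y$, $X=\{x_1,\dots,x_n\}$, $Y=\{y_1,\dots,y_m\}$, $n,m\ge 1$; attach $f_i\ge 1$ leaves (new vertices adjacent only to $x_i$) to each $x_i$; and attach $t_j\ge 0$ pendant triangles to each $y_j$ (two new vertices $u,v$ with edges $\{y_j,u\},\{y_j,v\},\{u,v\}$). Let $F=\sum_{i=1}^n f_i$ and $m_0=|\{j\in[m]: t_j=0\}|$. Then $G$ is pseudo-Gorenstein$^{*}$ if and only if $n+F+m_0$ is even.
   Context: For a finite simple graph $G$ on vertex set $[N]$, let $S=K[x_1,\dots,x_N]$ ($K$ a field) and $I(G)$ the edge ideal generated by $x_ix_j$, $\{i,j\}\in E(G)$. Let $\alpha(G)$ be the independence number (equal to $\dim S/I(G)$). Write the Hilbert series of $S/I(G)$ uniquely as $(h_0+\dots+h_st^s)/(1-t)^{\alpha(G)}$ with $h_s\ne 0$, and $\mathfrak a(G)=s-\alpha(G)$. $G$ is pseudo-Gorenstein$^{*}$ if $h_s=1$ and $\mathfrak a(G)=0$. *)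

theory Defs
  imports "HOL-Computational_Algebra.Computational_Algebra"
begin

definition simple_graph :: "'a set \<Rightarrow> 'a set set \<Rightarrow> bool" where
  "simple_graph V E \<longleftrightarrow> finite V \<and> (\<forall>e\<in>E. \<exists>u v. u \<noteq> v \<and> u \<in> V \<and> v \<in> V \<and> e = {u, v})"

definition connected_graph :: "'a set \<Rightarrow> 'a set set \<Rightarrow> bool" where
  "connected_graph V E \<longleftrightarrow> V \<noteq> {} \<and>
     (\<forall>u\<in>V. \<forall>v\<in>V. (\<lambda>x y. {x, y} \<in> E)\<^sup>*\<^sup>* u v)"

definition indep_set :: "'a set \<Rightarrow> 'a set set \<Rightarrow> 'a set \<Rightarrow> bool" where
  "indep_set V E A \<longleftrightarrow> A \<subseteq> V \<and> (\<forall>e\<in>E. \<not> e \<subseteq> A)"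

definition indep_number :: "'a set \<Rightarrow> 'a set set \<Rightarrow> nat" where
  "indep_number V E = Max (card ` {A. indep_set V E A})"

text \<open>Exponent vectors of the monomials of degree d in S = K[x_v : v in V] that are
  not in the edge ideal I(G), i.e. not divisible by any x_u x_v with {u,v} an edge
  (equivalently: the support is an independent set).  These monomials form a K-basis
  of the degree-d component of S/I(G).\<close>
definition std_monomials :: "'a set \<Rightarrow> 'a set set \<Rightarrow> nat \<Rightarrow> ('a \<Rightarrow> nat) set" where
  "std_monomials V E d = {a. (\<forall>v. v \<notin> V \<longrightarrow> a v = 0) \<and> (\<Sum>v\<in>V. a v) = d
                             \<and> indep_set V E {v. 0 < a v}}"

definition hilbert_fun :: "'a set \<Rightarrow> 'a set set \<Rightarrow> nat \<Rightarrow> nat" where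
  "hilbert_fun V E d = card (std_monomials V E d)"

definition hilbert_series :: "'a set \<Rightarrow> 'a set set \<Rightarrow> int fps" where
  "hilbert_series V E = Abs_fps (\<lambda>d. int (hilbert_fun V E d))"

definition h_poly :: "'a set \<Rightarrow> 'a set set \<Rightarrow> int poly" where
  "h_poly V E = (THE p. fps_of_poly p = hilbert_series V E * (1 - fps_X) ^ indep_number V E)"

definition a_invariant :: "'a set \<Rightarrow> 'a set set \<Rightarrow> int" where
  "a_invariant V E = int (degree (h_poly V E)) - int (indep_number V E)"

definition pseudo_gorenstein_star :: "'a set \<Rightarrow> 'a set set \<Rightarrow> bool" where
  "pseudo_gorenstein_star V E \<longleftrightarrow> lead_coeff (h_poly V E) = 1 \<and> a_invariant V E = 0"

text \<open>The construction: vertices x_i (i<n), y_j (j<m), leaves Lf i k (k < f i) at x_i,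
  and pendant triangles {y_j, TU j k, TV j k} (k < t j) at y_j.\<close>
datatype vert = Xv nat | Yv nat | Lf nat nat | TU nat nat | TV nat nat

definition base_verts :: "nat \<Rightarrow> nat \<Rightarrow> vert set" where
  "base_verts n m = Xv ` {..<n} \<union> Yv ` {..<m}"

definition base_edges :: "nat \<Rightarrow> nat \<Rightarrow> (nat \<Rightarrow> nat \<Rightarrow> bool) \<Rightarrow> vert set set" where
  "base_edges n m B = {{Xv i, Yv j} | i j. i < n \<and> j < m \<and> B i j}"

definition G_verts :: "nat \<Rightarrow> nat \<Rightarrow> (nat \<Rightarrow> nat) \<Rightarrow> (nat \<Rightarrow> nat) \<Rightarrow> vert set" where
  "G_verts n m f t = base_verts n m
     \<union> {Lf i k | i k. i < n \<and> k < f i}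
     \<union> {TU j k | j k. j < m \<and> k < t j}
     \<union> {TV j k | j k. j < m \<and> k < t j}"

definition G_edges :: "nat \<Rightarrow> nat \<Rightarrow> (nat \<Rightarrow> nat \<Rightarrow> bool) \<Rightarrow> (nat \<Rightarrow> nat) \<Rightarrow> (nat \<Rightarrow> nat)
                        \<Rightarrow> vert set set" where
  "G_edges n m B f t = base_edges n m B
     \<union> {{Xv i, Lf i k} | i k. i < n \<and> k < f i}
     \<union> {{Yv j, TU j k} | j k. j < m \<and> k < t j}
     \<union> {{Yv j, TV j k} | j k. j < m \<and> k < t j}
     \<union> {{TU j k, TV j k} | j k. j < m \<and> k < t j}"

end

theory Submission
  imports Defs
begin

text \<open>
  A standard monomial of S/I(G) is determined by its support, an independent set A, and the
  monomials with support exactly A have generating function t^|A| / (1-t)^|A|.  Hence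
  h(t) is the sum over independent sets A of t^|A| (1-t)^(alpha - |A|), so deg h <= alpha and
  h_alpha = (-1)^alpha * sum_A (-1)^|A|; thus G is pseudo-Gorenstein* iff this number is 1.

  For the graph of the theorem, toggling a leaf of some x_i not in A, or else (all x_i in A)
  the vertex u of a pendant triangle whose other free vertex v is not in A, is a
  sign-reversing involution on the independent sets whose only fixed point is
  A0 = X together with one v from each triangle.  So sum_A (-1)^|A| = (-1)^(n+T), where T is
  the number of triangles.  Finally alpha = F + m0 + T, attained by all leaves, the y_j
  without triangles and one v from each triangle, and the parity condition follows.
\<close>

definition support_monomials :: "'a set \<Rightarrow> nat \<Rightarrow> ('a \<Rightarrow> nat) set" where
  "support_monomials A d = {a. (\<forall>x. 0 < a x \<longleftrightarrow> x \<in> A) \<and> sum a A = d}"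

lemma finite_support_monomials:
  assumes "finite A"
  shows "finite (support_monomials A d)"
proof (rule finite_subset)
  show "support_monomials A d \<subseteq> {a. \<forall>x. (x \<in> A \<longrightarrow> a x \<in> {..d}) \<and> (x \<notin> A \<longrightarrow> a x = 0)}"
  proof (intro subsetI CollectI allI conjI impI)
    fix a x assume a: "a \<in> support_monomials A d"
    show "a x \<in> {..d}" if "x \<in> A"
      using a member_le_sum[OF that _ assms, of a] by (simp add: support_monomials_def)
    show "a x = 0" if "x \<notin> A"
      using a that by (auto simp: support_monomials_def)
  qed
  show "finite {a. \<forall>x. (x \<in> A \<longrightarrow> a x \<in> {..d}) \<and> (x \<notin> A \<longrightarrow> a x = 0)}"
    by (rule finite_set_of_finite_funs[OF assms]) simp
qed

lemma support_monomials_empty: "support_monomials {} d = (if d = 0 then {\<lambda>_. 0} else {})"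
  by (auto simp: support_monomials_def fun_eq_iff)

lemma support_monomials_0:
  assumes "finite A" and "A \<noteq> {}"
  shows "support_monomials A 0 = {}"
  using assms by (auto simp: support_monomials_def)

lemma sum_fun_upd_notin:
  "v \<notin> A \<Longrightarrow> sum (a(v := c)) A = sum a A"
  by (intro sum.cong) auto

lemma bij_betw_support_monomials_drop:
  assumes "finite A" and "v \<notin> A"
  shows "bij_betw (\<lambda>a. a(v := 0)) {a \<in> support_monomials (insert v A) (Suc d). a v = 1}
           (support_monomials A d)"
proof (rule bij_betw_byWitness[where f' = "\<lambda>a. a(v := 1)"])
  show "(\<lambda>a. a(v := 0)) ` {a \<in> support_monomials (insert v A) (Suc d). a v = 1} \<subseteq> support_monomials A d"
  proof (rule image_subsetI)
    fix a assume "a \<in> {a \<in> support_monomials (insert v A) (Suc d). a v = 1}"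
    then show "a(v := 0) \<in> support_monomials A d"
      using assms sum_fun_upd_notin[OF assms(2), of a 0] by (auto simp: support_monomials_def)
  qed
  show "(\<lambda>a. a(v := 1)) ` support_monomials A d \<subseteq> {a \<in> support_monomials (insert v A) (Suc d). a v = 1}"
  proof (rule image_subsetI)
    fix a assume "a \<in> support_monomials A d"
    then show "a(v := 1) \<in> {a \<in> support_monomials (insert v A) (Suc d). a v = 1}"
      using assms sum_fun_upd_notin[OF assms(2), of a 1] by (auto simp: support_monomials_def)
  qed
qed (use assms(2) in \<open>auto simp: support_monomials_def fun_eq_iff\<close>)

lemma bij_betw_support_monomials_decr:
  assumes "finite A" and "v \<notin> A"
  shows "bij_betw (\<lambda>a. a(v := a v - 1)) {a \<in> support_monomials (insert v A) (Suc d). a v \<noteq> 1}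
           (support_monomials (insert v A) d)"
proof (rule bij_betw_byWitness[where f' = "\<lambda>a. a(v := Suc (a v))"])
  show "(\<lambda>a. a(v := a v - 1)) ` {a \<in> support_monomials (insert v A) (Suc d). a v \<noteq> 1}
          \<subseteq> support_monomials (insert v A) d"
  proof (rule image_subsetI)
    fix a assume a: "a \<in> {a \<in> support_monomials (insert v A) (Suc d). a v \<noteq> 1}"
    then have "0 < a v" "a v \<noteq> 1" unfolding support_monomials_def by blast+
    then have "2 \<le> a v" by linarith
    with a show "a(v := a v - 1) \<in> support_monomials (insert v A) d"
      using assms sum_fun_upd_notin[OF assms(2), of a] by (auto simp: support_monomials_def)
  qed
  show "(\<lambda>a. a(v := Suc (a v))) ` support_monomials (insert v A) d
          \<subseteq> {a \<in> support_monomials (insert v A) (Suc d). a v \<noteq> 1}"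
  proof (rule image_subsetI)
    fix a assume a: "a \<in> support_monomials (insert v A) d"
    then have "0 < a v" unfolding support_monomials_def by blast
    with a show "a(v := Suc (a v)) \<in> {a \<in> support_monomials (insert v A) (Suc d). a v \<noteq> 1}"
      using assms sum_fun_upd_notin[OF assms(2), of a] by (auto simp: support_monomials_def)
  qed
qed (auto simp: support_monomials_def)

lemma card_support_monomials_Suc:
  assumes "finite A" and "v \<notin> A"
  shows "card (support_monomials (insert v A) (Suc d)) =
         card (support_monomials A d) + card (support_monomials (insert v A) d)"
proof -
  let ?M = "support_monomials (insert v A) (Suc d)"
  have fin: "finite ?M" using finite_support_monomials assms(1) by blast
  have "card ?M = card ({a \<in> ?M. a v = 1} \<union> {a \<in> ?M. a v \<noteq> 1})"
    by (rule arg_cong[where f = card]) auto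
  also have "\<dots> = card {a \<in> ?M. a v = 1} + card {a \<in> ?M. a v \<noteq> 1}"
    by (rule card_Un_disjoint) (use fin in auto)
  also have "\<dots> = card (support_monomials A d) + card (support_monomials (insert v A) d)"
    using bij_betw_same_card[OF bij_betw_support_monomials_drop[OF assms]]
      bij_betw_same_card[OF bij_betw_support_monomials_decr[OF assms]] by simp
  finally show ?thesis .
qed

definition support_series :: "'a set \<Rightarrow> int fps" where
  "support_series A = Abs_fps (\<lambda>d. int (card (support_monomials A d)))"

lemma support_series_times_power:
  "finite A \<Longrightarrow> support_series A * (1 - fps_X) ^ card A = fps_X ^ card A"
proof (induction A rule: finite_induct)
  case empty
  have "support_series {} = 1"
    by (rule fps_ext) (simp add: support_series_def support_monomials_empty)
  then show ?case by simp
next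
  case (insert v A)
  have "support_series (insert v A) = fps_X * support_series A + fps_X * support_series (insert v A)"
  proof (rule fps_ext)
    fix d
    show "support_series (insert v A) $ d
            = (fps_X * support_series A + fps_X * support_series (insert v A)) $ d"
      using insert.hyps by (cases d)
        (simp_all add: support_series_def support_monomials_0 card_support_monomials_Suc)
  qed
  then have "support_series (insert v A) * (1 - fps_X) = fps_X * support_series A"
    by (simp add: algebra_simps)
  then have "support_series (insert v A) * (1 - fps_X) ^ card (insert v A)
               = fps_X * (support_series A * (1 - fps_X) ^ card A)"
    using insert.hyps by (simp add: mult_ac)
  then show ?case using insert.hyps insert.IH by simp
qed

definition indep_sets :: "'a set \<Rightarrow> 'a set set \<Rightarrow> 'a set set" where
  "indep_sets V E = {A. indep_set V E A}"

lemma finite_indep_sets: "finite V \<Longrightarrow> finite (indep_sets V E)"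
  by (rule finite_subset[of _ "Pow V"]) (auto simp: indep_sets_def indep_set_def)

lemma indep_set_finite: "finite V \<Longrightarrow> indep_set V E A \<Longrightarrow> finite A"
  by (auto simp: indep_set_def intro: finite_subset)

lemma card_le_indep_number:
  assumes "finite V" and "indep_set V E A"
  shows "card A \<le> indep_number V E"
  unfolding indep_number_def
  using assms finite_indep_sets[OF assms(1), of E] by (intro Max_ge) (auto simp: indep_sets_def)

lemma std_monomials_eq_UN:
  assumes "finite V"
  shows "std_monomials V E d = (\<Union>A\<in>indep_sets V E. support_monomials A d)"
proof (intro equalityI subsetI)
  fix a assume "a \<in> std_monomials V E d"
  then have a: "\<forall>v. v \<notin> V \<longrightarrow> a v = 0" "sum a V = d" "indep_set V E {v. 0 < a v}"
    by (auto simp: std_monomials_def)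
  have "sum a {v. 0 < a v} = sum a V"
    using a(3) by (intro sum.mono_neutral_left[OF assms]) (auto simp: indep_set_def)
  with a show "a \<in> (\<Union>A\<in>indep_sets V E. support_monomials A d)"
    by (auto simp: indep_sets_def support_monomials_def)
next
  fix a assume "a \<in> (\<Union>A\<in>indep_sets V E. support_monomials A d)"
  then obtain A where A: "indep_set V E A" "\<forall>x. 0 < a x \<longleftrightarrow> x \<in> A" "sum a A = d"
    by (auto simp: indep_sets_def support_monomials_def)
  then have "A \<subseteq> V" "{v. 0 < a v} = A" by (auto simp: indep_set_def)
  moreover have "sum a A = sum a V"
    using A(2) \<open>A \<subseteq> V\<close> by (intro sum.mono_neutral_left[OF assms]) auto
  ultimately show "a \<in> std_monomials V E d"
    using A by (auto simp: std_monomials_def)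
qed

lemma hilbert_series_eq_sum_indep_sets:
  assumes "finite V"
  shows "hilbert_series V E = (\<Sum>A\<in>indep_sets V E. support_series A)"
proof (rule fps_ext)
  fix d
  have "\<forall>A\<in>indep_sets V E. finite (support_monomials A d)"
    using assms by (auto simp: indep_sets_def intro: finite_support_monomials indep_set_finite)
  moreover have "\<forall>A\<in>indep_sets V E. \<forall>B\<in>indep_sets V E. A \<noteq> B \<longrightarrow>
                   support_monomials A d \<inter> support_monomials B d = {}"
    by (auto simp: support_monomials_def)
  ultimately have "hilbert_fun V E d = (\<Sum>A\<in>indep_sets V E. card (support_monomials A d))"
    unfolding hilbert_fun_def std_monomials_eq_UN[OF assms]
    by (intro card_UN_disjoint finite_indep_sets assms)
  then show "hilbert_series V E $ d = (\<Sum>A\<in>indep_sets V E. support_series A) $ d"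
    by (simp add: hilbert_series_def support_series_def fps_sum_nth)
qed

lemma fps_of_poly_one_minus_X: "fps_of_poly [:1, -1:] = (1 - fps_X :: int fps)"
  by (rule fps_ext) (auto simp: coeff_pCons split: nat.split)

lemma h_poly_eq_sum_indep_sets:
  assumes "finite V"
  shows "h_poly V E = (\<Sum>A\<in>indep_sets V E.
           monom 1 (card A) * [:1, -1:] ^ (indep_number V E - card A))"
    (is "_ = ?h")
proof -
  let ?\<alpha> = "indep_number V E"
  have "hilbert_series V E * (1 - fps_X) ^ ?\<alpha>
          = (\<Sum>A\<in>indep_sets V E. support_series A * (1 - fps_X) ^ ?\<alpha>)"
    by (simp add: hilbert_series_eq_sum_indep_sets[OF assms] sum_distrib_right)
  also have "\<dots> = (\<Sum>A\<in>indep_sets V E. fps_X ^ card A * (1 - fps_X) ^ (?\<alpha> - card A))"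
  proof (rule sum.cong)
    fix A assume "A \<in> indep_sets V E"
    then have "card A \<le> ?\<alpha>" "finite A"
      using assms by (auto simp: indep_sets_def card_le_indep_number indep_set_finite)
    then show "support_series A * (1 - fps_X) ^ ?\<alpha> = fps_X ^ card A * (1 - fps_X) ^ (?\<alpha> - card A)"
      by (metis (no_types) le_add_diff_inverse mult.assoc power_add support_series_times_power)
  qed simp
  also have "\<dots> = fps_of_poly ?h"
    by (simp add: fps_of_poly_sum fps_of_poly_mult fps_of_poly_power fps_of_poly_monom'
        fps_of_poly_one_minus_X)
  finally show ?thesis
    unfolding h_poly_def by (intro the_equality) (simp_all add: fps_of_poly_eq_iff)
qed

lemma degree_h_poly_le:
  assumes "finite V"
  shows "degree (h_poly V E) \<le> indep_number V E"
  unfolding h_poly_eq_sum_indep_sets[OF assms]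
proof (rule degree_sum_le[OF finite_indep_sets[OF assms]])
  fix A assume "A \<in> indep_sets V E"
  then have "card A \<le> indep_number V E"
    using assms by (simp add: indep_sets_def card_le_indep_number)
  have "degree ([:1, -1:] ^ k :: int poly) \<le> k" for k
    using degree_power_le[of "[:1, -1:] :: int poly" k] by simp
  then have "degree (monom 1 (card A) * [:1, -1:] ^ (indep_number V E - card A) :: int poly)
               \<le> card A + (indep_number V E - card A)"
    by (intro order_trans[OF degree_mult_le] add_mono degree_monom_le)
  also have "\<dots> = indep_number V E"
    using \<open>card A \<le> indep_number V E\<close> by simp
  finally show "degree (monom 1 (card A) * [:1, -1:] ^ (indep_number V E - card A)
                  :: int poly) \<le> indep_number V E" .
qed

lemma coeff_h_poly_indep_number:
  assumes "finite V"
  shows "coeff (h_poly V E) (indep_number V E)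
           = (-1) ^ indep_number V E * (\<Sum>A\<in>indep_sets V E. (-1) ^ card A)"
  unfolding h_poly_eq_sum_indep_sets[OF assms] coeff_sum sum_distrib_left
proof (rule sum.cong)
  fix A assume "A \<in> indep_sets V E"
  then have le: "card A \<le> indep_number V E"
    using assms by (simp add: indep_sets_def card_le_indep_number)
  have "coeff (monom 1 (card A) * [:1, -1:] ^ (indep_number V E - card A) :: int poly)
          (indep_number V E) = coeff ([:1, -1:] ^ (indep_number V E - card A) :: int poly)
          (indep_number V E - card A)"
    using le by (simp add: coeff_monom_mult)
  also have "\<dots> = (-1) ^ (indep_number V E - card A)"
    using lead_coeff_power[of "[:1, -1:] :: int poly"] by (simp add: degree_power_eq)
  also have "\<dots> = (-1) ^ indep_number V E * (-1) ^ card A"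
    using le by (auto simp: minus_one_power_iff)
  finally show "coeff (monom 1 (card A) * [:1, -1:] ^ (indep_number V E - card A) :: int poly)
                  (indep_number V E) = (-1) ^ indep_number V E * (-1) ^ card A" .
qed simp

theorem pseudo_gorenstein_star_iff_alternating_sum:
  assumes "finite V"
  shows "pseudo_gorenstein_star V E \<longleftrightarrow>
           (-1) ^ indep_number V E * (\<Sum>A\<in>indep_sets V E. (-1) ^ card A) = (1 :: int)"
proof -
  have "pseudo_gorenstein_star V E \<longleftrightarrow> coeff (h_poly V E) (indep_number V E) = 1"
    using degree_h_poly_le[OF assms, of E] le_degree[of "h_poly V E" "indep_number V E"]
    by (auto simp: pseudo_gorenstein_star_def a_invariant_def)
  then show ?thesis by (simp add: coeff_h_poly_indep_number[OF assms])
qed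

lemma indep_set_edge: "indep_set V E A \<Longrightarrow> {x, y} \<in> E \<Longrightarrow> x \<in> A \<Longrightarrow> y \<notin> A"
  by (auto simp: indep_set_def)

definition toggle :: "'a \<Rightarrow> 'a set \<Rightarrow> 'a set" where
  "toggle x A = (if x \<in> A then A - {x} else insert x A)"

lemma toggle_toggle [simp]: "toggle x (toggle x A) = A"
  by (auto simp: toggle_def)

lemma mem_toggle_iff: "y \<in> toggle x A \<longleftrightarrow> (if y = x then x \<notin> A else y \<in> A)"
  by (auto simp: toggle_def)

lemma minus_one_power_card_toggle:
  assumes "finite A"
  shows "(-1 :: int) ^ card (toggle x A) = - ((-1) ^ card A)"
proof (cases "x \<in> A")
  case True
  then have "card A \<noteq> 0" using assms by auto
  then show ?thesis using True assms by (cases "card A") (simp_all add: toggle_def)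
next
  case False
  then show ?thesis using assms by (simp add: toggle_def)
qed

lemma indep_set_toggle:
  assumes "simple_graph V E" and "indep_set V E A" and "x \<in> V"
    and "\<And>y. {x, y} \<in> E \<Longrightarrow> y \<notin> A"
  shows "indep_set V E (toggle x A)"
proof (cases "x \<in> A")
  case True
  then show ?thesis using assms(2) by (auto simp: toggle_def indep_set_def)
next
  case False
  have "\<not> e \<subseteq> insert x A" if "e \<in> E" for e
  proof
    assume sub: "e \<subseteq> insert x A"
    obtain u v where "u \<noteq> v" "e = {u, v}"
      using assms(1) \<open>e \<in> E\<close> by (auto simp: simple_graph_def)
    then consider "x \<notin> e" | y where "e = {x, y}" "y \<noteq> x" by blast
    then show False
    proof cases
      case 1
      then show False using sub assms(2) \<open>e \<in> E\<close> by (auto simp: indep_set_def)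
    next
      case 2
      then show False using sub assms(4) \<open>e \<in> E\<close> by auto
    qed
  qed
  then show ?thesis using False assms(2,3) by (auto simp: toggle_def indep_set_def)
qed

lemma sum_sign_reversing_involution:
  fixes h :: "'a \<Rightarrow> int"
  assumes "finite S" and "a \<in> S"
    and "\<And>x. x \<in> S - {a} \<Longrightarrow> \<phi> x \<in> S - {a} \<and> \<phi> (\<phi> x) = x \<and> h (\<phi> x) = - h x"
  shows "sum h S = h a"
proof -
  have "sum h (S - {a}) = sum (\<lambda>x. - h x) (S - {a})"
    by (rule sum.reindex_bij_witness[where i = \<phi> and j = \<phi>]) (use assms(3) in auto)
  then have "sum h (S - {a}) = 0" by (simp add: sum_negf)
  then show ?thesis using assms(1,2) by (simp add: sum.remove)
qed

lemma indexed_family_eq_image: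
  fixes g :: "nat \<Rightarrow> nat \<Rightarrow> 'a" and f :: "nat \<Rightarrow> nat"
  shows "{g i k | i k. i < n \<and> k < f i} = (\<lambda>(i, k). g i k) ` Sigma {..<n} (\<lambda>i. {..<f i})"
  by auto

lemma finite_indexed_family:
  fixes g :: "nat \<Rightarrow> nat \<Rightarrow> 'a" and f :: "nat \<Rightarrow> nat"
  shows "finite {g i k | i k. i < n \<and> k < f i}"
  unfolding indexed_family_eq_image by auto

lemma card_indexed_family:
  fixes g :: "nat \<Rightarrow> nat \<Rightarrow> 'a" and f :: "nat \<Rightarrow> nat"
  assumes "\<And>i k i' k'. g i k = g i' k' \<Longrightarrow> i = i' \<and> k = k'"
  shows "card {g i k | i k. i < n \<and> k < f i} = (\<Sum>i<n. f i)"
proof -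
  have "inj_on (\<lambda>(i, k). g i k) (Sigma {..<n} (\<lambda>i. {..<f i}))"
    using assms by (auto simp: inj_on_def)
  then show ?thesis unfolding indexed_family_eq_image by (simp add: card_image)
qed

lemma connected_base_graph_Y_neighbour:
  assumes "n \<ge> 1" and "connected_graph (base_verts n m) (base_edges n m B)" and "j < m"
  shows "\<exists>i<n. B i j"
proof -
  have "Yv j \<in> base_verts n m" "Xv 0 \<in> base_verts n m"
    using assms by (auto simp: base_verts_def)
  then have "(\<lambda>x y. {x, y} \<in> base_edges n m B)\<^sup>*\<^sup>* (Yv j) (Xv 0)"
    using assms(2) unfolding connected_graph_def by blast
  then obtain z where "{Yv j, z} \<in> base_edges n m B"
    by (rule converse_rtranclpE) auto
  then show ?thesis by (auto simp: base_edges_def doubleton_eq_iff)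
qed

locale leaf_triangle_graph =
  fixes n m :: nat and B :: "nat \<Rightarrow> nat \<Rightarrow> bool" and f t :: "nat \<Rightarrow> nat"
  assumes leaves_exist: "\<And>i. i < n \<Longrightarrow> 1 \<le> f i"
    and Y_neighbour: "\<And>j. j < m \<Longrightarrow> \<exists>i<n. B i j"
begin

abbreviation "V \<equiv> G_verts n m f t"
abbreviation "E \<equiv> G_edges n m B f t"

lemma mem_G_verts [simp]:
  "Xv i \<in> V \<longleftrightarrow> i < n" "Yv j \<in> V \<longleftrightarrow> j < m" "Lf i k \<in> V \<longleftrightarrow> i < n \<and> k < f i"
  "TU j k \<in> V \<longleftrightarrow> j < m \<and> k < t j" "TV j k \<in> V \<longleftrightarrow> j < m \<and> k < t j"
  by (auto simp: G_verts_def base_verts_def)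

lemma G_edgesE:
  assumes "e \<in> E"
  obtains i j where "i < n" "j < m" "B i j" "e = {Xv i, Yv j}"
    | i k where "i < n" "k < f i" "e = {Xv i, Lf i k}"
    | j k where "j < m" "k < t j" "e = {Yv j, TU j k}"
    | j k where "j < m" "k < t j" "e = {Yv j, TV j k}"
    | j k where "j < m" "k < t j" "e = {TU j k, TV j k}"
  using assms unfolding G_edges_def base_edges_def by blast

lemma G_edgesI:
  "i < n \<Longrightarrow> j < m \<Longrightarrow> B i j \<Longrightarrow> {Xv i, Yv j} \<in> E"
  "i < n \<Longrightarrow> k < f i \<Longrightarrow> {Xv i, Lf i k} \<in> E"
  "j < m \<Longrightarrow> k < t j \<Longrightarrow> {Yv j, TU j k} \<in> E"
  "j < m \<Longrightarrow> k < t j \<Longrightarrow> {Yv j, TV j k} \<in> E"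
  "j < m \<Longrightarrow> k < t j \<Longrightarrow> {TU j k, TV j k} \<in> E"
  unfolding G_edges_def base_edges_def by blast+

lemma simple_graph_G: "simple_graph V E"
proof -
  have doubleton: "\<exists>u v. u \<noteq> v \<and> u \<in> V \<and> v \<in> V \<and> {a, b} = {u, v}"
    if "a \<noteq> b" "a \<in> V" "b \<in> V" for a b
    using that by blast
  have "finite V"
    by (simp add: G_verts_def base_verts_def finite_indexed_family)
  moreover have "\<exists>u v. u \<noteq> v \<and> u \<in> V \<and> v \<in> V \<and> e = {u, v}" if "e \<in> E" for e
    using that by (rule G_edgesE) (auto intro!: doubleton)
  ultimately show ?thesis by (simp add: simple_graph_def)
qed

lemma finite_G_verts: "finite V"
  using simple_graph_G by (simp add: simple_graph_def)

lemma G_edge_Lf: "{Lf i k, y} \<in> E \<Longrightarrow> y = Xv i"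
  by (erule G_edgesE) (auto simp: doubleton_eq_iff)

lemma G_edge_TU: "{TU j k, y} \<in> E \<Longrightarrow> y = Yv j \<or> y = TV j k"
  by (erule G_edgesE) (auto simp: doubleton_eq_iff)

definition "TVs = {TV j k | j k. j < m \<and> k < t j}"

definition "A0 = Xv ` {..<n} \<union> TVs"

lemma card_A0: "card A0 = n + (\<Sum>j<m. t j)"
proof -
  have "card TVs = (\<Sum>j<m. t j)"
    unfolding TVs_def by (rule card_indexed_family) simp
  moreover have "card (Xv ` {..<n}) = n"
    by (simp add: card_image inj_on_def)
  moreover have "Xv ` {..<n} \<inter> TVs = {}"
    by (auto simp: TVs_def)
  ultimately show ?thesis
    unfolding A0_def by (simp add: card_Un_disjoint TVs_def finite_indexed_family)
qed

lemma indep_set_A0: "indep_set V E A0"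
proof -
  have "\<not> e \<subseteq> A0" if "e \<in> E" for e
    using that by (rule G_edgesE) (auto simp: A0_def TVs_def)
  then show ?thesis by (auto simp: indep_set_def A0_def TVs_def)
qed

lemma Yv_notin_indep_set:
  assumes "indep_set V E A" and "Xv ` {..<n} \<subseteq> A"
  shows "Yv j \<notin> A"
proof
  assume "Yv j \<in> A"
  then have "j < m" using assms(1) by (auto simp: indep_set_def)
  then obtain i where "i < n" "B i j" using Y_neighbour by blast
  then show False
    using assms \<open>Yv j \<in> A\<close> \<open>j < m\<close> indep_set_edge[OF _ G_edgesI(1)] by blast
qed

lemma indep_set_A0_maximal:
  assumes "indep_set V E A" and "A0 \<subseteq> A"
  shows "A = A0"
proof (rule antisym[OF subsetI assms(2)])
  fix x assume "x \<in> A"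
  then have "x \<in> V" using assms(1) by (auto simp: indep_set_def)
  have X: "Xv i \<in> A" if "i < n" for i using assms(2) that by (auto simp: A0_def)
  show "x \<in> A0"
  proof (cases x)
    case (Xv i)
    then show ?thesis using \<open>x \<in> V\<close> by (simp add: A0_def)
  next
    case (Yv j)
    have "Xv ` {..<n} \<subseteq> A" using X by blast
    then show ?thesis using Yv Yv_notin_indep_set[OF assms(1)] \<open>x \<in> A\<close> by blast
  next
    case (Lf i k)
    then have "i < n" "k < f i" using \<open>x \<in> V\<close> by simp_all
    then have "Lf i k \<notin> A" using indep_set_edge[OF assms(1) G_edgesI(2)] X by blast
    then show ?thesis using Lf \<open>x \<in> A\<close> by simp
  next
    case (TU j k)
    then have "j < m" "k < t j" using \<open>x \<in> V\<close> by simp_all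
    moreover have "TV j k \<in> A" using calculation assms(2) by (auto simp: A0_def TVs_def)
    ultimately have "TU j k \<notin> A" using indep_set_edge[OF assms(1) G_edgesI(5)] by blast
    then show ?thesis using TU \<open>x \<in> A\<close> by simp
  next
    case (TV j k)
    then show ?thesis using \<open>x \<in> V\<close> by (simp add: A0_def TVs_def)
  qed
qed

text \<open>Toggling pivot A is the involution; pivot A is meaningful only when A0 is not a
  subset of A, where the choice below is not vacuous.\<close>
definition pivot :: "vert set \<Rightarrow> vert" where
  "pivot A =
     (if \<exists>i<n. Xv i \<notin> A then Lf (SOME i. i < n \<and> Xv i \<notin> A) 0
      else (let p = SOME p. fst p < m \<and> snd p < t (fst p) \<and> TV (fst p) (snd p) \<notin> A
            in TU (fst p) (snd p)))"

lemma pivot_neq [simp]: "pivot A \<noteq> Xv i" "pivot A \<noteq> TV j k"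
  by (simp_all add: pivot_def Let_def)

lemma pivot_notin_A0: "pivot A \<notin> A0"
  unfolding A0_def TVs_def by (simp add: image_iff)

lemma pivot_toggle_pivot: "pivot (toggle (pivot A) A) = pivot A"
proof -
  have "Xv i \<in> toggle (pivot A) A \<longleftrightarrow> Xv i \<in> A" "TV j k \<in> toggle (pivot A) A \<longleftrightarrow> TV j k \<in> A"
    for i j k by (simp_all add: mem_toggle_iff pivot_neq[symmetric])
  then show ?thesis
    unfolding pivot_def[of "toggle (pivot A) A"] by (simp only:) (simp only: pivot_def)
qed

lemma pivot_free:
  assumes "indep_set V E A" and "\<not> A0 \<subseteq> A"
  shows "pivot A \<in> V" and "\<And>y. {pivot A, y} \<in> E \<Longrightarrow> y \<notin> A"
proof -
  have "pivot A \<in> V \<and> (\<forall>y. {pivot A, y} \<in> E \<longrightarrow> y \<notin> A)"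
  proof (cases "\<exists>i<n. Xv i \<notin> A")
    case True
    let ?i = "SOME i. i < n \<and> Xv i \<notin> A"
    have "?i < n" "Xv ?i \<notin> A" using someI_ex[OF True[simplified Bex_def]] by auto
    moreover have "pivot A = Lf ?i 0" using True by (simp add: pivot_def)
    ultimately show ?thesis using leaves_exist G_edge_Lf by fastforce
  next
    case False
    then have X: "Xv ` {..<n} \<subseteq> A" by auto
    let ?P = "\<lambda>p. fst p < m \<and> snd p < t (fst p) \<and> TV (fst p) (snd p) \<notin> A"
    let ?p = "SOME p. ?P p"
    have "\<exists>p. ?P p" using assms(2) X by (auto simp: A0_def TVs_def)
    then have "?P ?p" by (rule someI_ex)
    moreover have "pivot A = TU (fst ?p) (snd ?p)" using False by (simp add: pivot_def Let_def)
    ultimately show ?thesis using G_edge_TU Yv_notin_indep_set[OF assms(1) X] by fastforce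
  qed
  then show "pivot A \<in> V" and "\<And>y. {pivot A, y} \<in> E \<Longrightarrow> y \<notin> A" by blast+
qed

lemma alternating_sum_indep_sets:
  "(\<Sum>A\<in>indep_sets V E. (-1 :: int) ^ card A) = (-1) ^ (n + (\<Sum>j<m. t j))"
proof -
  have "(\<Sum>A\<in>indep_sets V E. (-1 :: int) ^ card A) = (-1) ^ card A0"
  proof (rule sum_sign_reversing_involution[where \<phi> = "\<lambda>A. toggle (pivot A) A"])
    show "finite (indep_sets V E)" using finite_indep_sets[OF finite_G_verts] .
    show "A0 \<in> indep_sets V E" using indep_set_A0 by (simp add: indep_sets_def)
  next
    fix A assume "A \<in> indep_sets V E - {A0}"
    then have A: "indep_set V E A" and "\<not> A0 \<subseteq> A"
      using indep_set_A0_maximal by (auto simp: indep_sets_def)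
    have "indep_set V E (toggle (pivot A) A)"
      using simple_graph_G A pivot_free[OF A \<open>\<not> A0 \<subseteq> A\<close>] by (rule indep_set_toggle)
    moreover have "x \<in> toggle (pivot A) A \<longleftrightarrow> x \<in> A" if "x \<in> A0" for x
      using that pivot_notin_A0[of A] by (auto simp: mem_toggle_iff)
    then have "toggle (pivot A) A \<noteq> A0" using \<open>\<not> A0 \<subseteq> A\<close> by auto
    moreover have "finite A" using indep_set_finite[OF finite_G_verts A] .
    ultimately show "toggle (pivot A) A \<in> indep_sets V E - {A0} \<and>
        toggle (pivot (toggle (pivot A) A)) (toggle (pivot A) A) = A \<and>
        (-1 :: int) ^ card (toggle (pivot A) A) = - ((-1) ^ card A)"
      by (simp add: indep_sets_def pivot_toggle_pivot minus_one_power_card_toggle[OF \<open>finite A\<close>])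
  qed
  then show ?thesis by (simp add: card_A0)
qed

definition "max_indep = {Lf i k | i k. i < n \<and> k < f i} \<union> Yv ` {j. j < m \<and> t j = 0} \<union> TVs"

lemma card_max_indep:
  "card max_indep = (\<Sum>i<n. f i) + card {j. j < m \<and> t j = 0} + (\<Sum>j<m. t j)"
proof -
  have "card {Lf i k | i k. i < n \<and> k < f i} = (\<Sum>i<n. f i)"
    by (rule card_indexed_family) simp
  moreover have "card (Yv ` {j. j < m \<and> t j = 0}) = card {j. j < m \<and> t j = 0}"
    by (simp add: card_image inj_on_def)
  moreover have "card TVs = (\<Sum>j<m. t j)"
    unfolding TVs_def by (rule card_indexed_family) simp
  ultimately show ?thesis
    unfolding max_indep_def TVs_def
    by (subst card_Un_disjoint; auto simp: finite_indexed_family)+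
qed

lemma indep_set_max_indep: "indep_set V E max_indep"
proof -
  have "\<not> e \<subseteq> max_indep" if "e \<in> E" for e
    using that by (rule G_edgesE) (auto simp: max_indep_def TVs_def)
  then show ?thesis by (auto simp: indep_set_def max_indep_def TVs_def)
qed

text \<open>Injective on independent sets: x_i and its leaf, y_j and its first triangle, and the
  two free vertices of a triangle are never chosen together.\<close>
fun collapse :: "vert \<Rightarrow> vert" where
  "collapse (Xv i) = Lf i 0"
| "collapse (Yv j) = (if t j = 0 then Yv j else TV j 0)"
| "collapse (Lf i k) = Lf i k"
| "collapse (TU j k) = TV j k"
| "collapse (TV j k) = TV j k"

lemma inj_on_collapse:
  assumes "indep_set V E A"
  shows "inj_on collapse A"
proof (rule inj_onI)
  fix x y assume "x \<in> A" "y \<in> A" "collapse x = collapse y"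
  have AV: "A \<subseteq> V" using assms by (simp add: indep_set_def)
  have conflict: "x \<in> A \<Longrightarrow> y \<in> A \<Longrightarrow> {x, y} \<in> E \<Longrightarrow> False" for x y
    using indep_set_edge[OF assms] by blast
  have "Xv i \<in> A \<Longrightarrow> Lf i 0 \<in> A \<Longrightarrow> False"
    and "Yv j \<in> A \<Longrightarrow> TU j 0 \<in> A \<Longrightarrow> False"
    and "Yv j \<in> A \<Longrightarrow> TV j 0 \<in> A \<Longrightarrow> False"
    and "TU j k \<in> A \<Longrightarrow> TV j k \<in> A \<Longrightarrow> False" for i j k
    by (metis AV G_edgesI conflict mem_G_verts subsetD)+
  with \<open>x \<in> A\<close> \<open>y \<in> A\<close> \<open>collapse x = collapse y\<close> show "x = y"
    by (cases x; cases y) (auto split: if_splits)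
qed

lemma collapse_in_max_indep: "x \<in> V \<Longrightarrow> collapse x \<in> max_indep"
  using leaves_exist by (cases x) (auto simp: max_indep_def TVs_def Suc_le_eq)

lemma indep_number_eq: "indep_number V E = card max_indep"
  unfolding indep_number_def
proof (rule Max_eqI)
  show "finite (card ` {A. indep_set V E A})"
    using finite_indep_sets[OF finite_G_verts] by (simp add: indep_sets_def)
  show "card max_indep \<in> card ` {A. indep_set V E A}"
    using indep_set_max_indep by blast
next
  fix c assume "c \<in> card ` {A. indep_set V E A}"
  then obtain A where A: "indep_set V E A" "c = card A" by blast
  have "collapse ` A \<subseteq> max_indep"
    using A(1) collapse_in_max_indep by (auto simp: indep_set_def)
  then show "c \<le> card max_indep"
    using A card_inj_on_le[OF inj_on_collapse[OF A(1)]] by (simp add: max_indep_def TVs_def finite_indexed_family)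
qed

end

theorem corollary4p4:
  fixes n m :: nat and B :: "nat \<Rightarrow> nat \<Rightarrow> bool" and f t :: "nat \<Rightarrow> nat"
  assumes "n \<ge> 1" and "m \<ge> 1"
    and "connected_graph (base_verts n m) (base_edges n m B)"
    and "\<forall>i<n. f i \<ge> 1"
  shows "pseudo_gorenstein_star (G_verts n m f t) (G_edges n m B f t) \<longleftrightarrow>
         even (n + (\<Sum>i<n. f i) + card {j. j < m \<and> t j = 0})"
proof -
  interpret leaf_triangle_graph n m B f t
    using assms(1,3,4) connected_base_graph_Y_neighbour by unfold_locales auto
  have "pseudo_gorenstein_star V E \<longleftrightarrow>
          (-1 :: int) ^ card max_indep * (-1) ^ (n + (\<Sum>j<m. t j)) = 1"
    using pseudo_gorenstein_star_iff_alternating_sum[OF finite_G_verts]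
    by (simp add: indep_number_eq alternating_sum_indep_sets)
  also have "\<dots> \<longleftrightarrow> even (card max_indep + n + (\<Sum>j<m. t j))"
    by (simp add: power_add[symmetric] minus_one_power_iff)
  also have "\<dots> \<longleftrightarrow> even (n + (\<Sum>i<n. f i) + card {j. j < m \<and> t j = 0})"
    unfolding card_max_indep by presburger
  finally show ?thesis .
qed

end
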